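(* Let $n\ge1$, let $t_1,\dots,t_{n+1}$ be real nodes in strictly increasing order (or in strictly decreasing order), and let $f$ be a real function such that the entries of the vector $(f(t_1),\dots,f(t_{n+1}))$ can be computed to high relative accuracy and have alternating signs. Then the divided differences $[t_i,\dots,t_{i+k}]f$, $k=0,\dots,n$, $i=1,\dots,n+1-k$, can be computed to high relative accuracy using the recursion $$[t_i]f=f(t_i),\qquad [t_i,\dots,t_{i+k}]f=\frac{[t_{i+1},\dots,t_{i+k}]f-[t_i,\dots,t_{i+k-1}]f}{t_{i+k}-t_i}.$$
   Context: A real quantity is said to be computed to high relative accuracy (HRA) in a floating-point arithmetic with unit roundoff $u$ if the relative error of the computed value is bounded by $Cu$, where $C>0$ is a constant independent of the arithmetic precision. *)

theory Defs
  imports Main Complex_Main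
begin

text \<open>Standard model of floating-point arithmetic with unit roundoff u:
  the computed result of the operation op applied to a, b equals the exact
  result times (1 + delta) with abs delta bounded by u.\<close>
definition std_op :: "real \<Rightarrow> (real \<Rightarrow> real \<Rightarrow> real) \<Rightarrow> (real \<Rightarrow> real \<Rightarrow> real) \<Rightarrow> bool" where
  "std_op u op fl \<longleftrightarrow> (\<forall>a b. \<exists>\<delta>. \<bar>\<delta>\<bar> \<le> u \<and> fl a b = op a b * (1 + \<delta>))"

fun divdiff :: "(nat \<Rightarrow> real) \<Rightarrow> (nat \<Rightarrow> real) \<Rightarrow> nat \<Rightarrow> nat \<Rightarrow> real" where
  "divdiff t y 0 i = y i"
| "divdiff t y (Suc k) i =
     (divdiff t y k (Suc i) - divdiff t y k i) / (t (i + Suc k) - t i)"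

fun fl_divdiff :: "(real \<Rightarrow> real \<Rightarrow> real) \<Rightarrow> (real \<Rightarrow> real \<Rightarrow> real) \<Rightarrow>
    (nat \<Rightarrow> real) \<Rightarrow> (nat \<Rightarrow> real) \<Rightarrow> nat \<Rightarrow> nat \<Rightarrow> real" where
  "fl_divdiff fsub fdiv t yv 0 i = yv i"
| "fl_divdiff fsub fdiv t yv (Suc k) i =
     fdiv (fsub (fl_divdiff fsub fdiv t yv k (Suc i)) (fl_divdiff fsub fdiv t yv k i))
          (fsub (t (i + Suc k)) (t i))"

end

theory Submission
  imports Defs
begin

text \<open>If the data alternate in sign and the nodes are monotone, then the divided differences
  of each fixed order alternate in sign as well: consecutive numerators are differences of
  three alternating numbers, hence of opposite signs, while all denominators share the sign
  of the node ordering. So every subtraction in the recursion combines numbers of opposite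
  signs, where no cancellation occurs and relative errors are preserved; the roundings and
  the division by a rounded node difference add only O(u).\<close>

lemma abs_diff_of_opposite_signs:
  fixes a b :: real
  assumes "a * b < 0"
  shows "\<bar>a - b\<bar> = \<bar>a\<bar> + \<bar>b\<bar>"
  using assms by (cases "a \<ge> 0") (auto simp: mult_less_0_iff)

lemma consecutive_diffs_opposite_signs:
  fixes a b c :: real
  assumes "a * b < 0" "b * c < 0"
  shows "(b - a) * (c - b) < 0"
  using assms by (cases "b \<ge> 0") (auto simp: mult_less_0_iff)

lemma rel_err_diff_of_opposite_signs:
  fixes a b A B e :: real
  assumes "A * B < 0" "\<bar>a - A\<bar> \<le> e * \<bar>A\<bar>" "\<bar>b - B\<bar> \<le> e * \<bar>B\<bar>"
  shows "\<bar>(a - b) - (A - B)\<bar> \<le> e * \<bar>A - B\<bar>"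
proof -
  have "\<bar>(a - b) - (A - B)\<bar> \<le> \<bar>a - A\<bar> + \<bar>b - B\<bar>" by simp
  also have "\<dots> \<le> e * (\<bar>A\<bar> + \<bar>B\<bar>)" using assms by (simp add: distrib_left)
  finally show ?thesis using abs_diff_of_opposite_signs[OF assms(1)] by simp
qed

lemma rel_err_mult_one_plus:
  fixes a A r u d :: real
  assumes "\<bar>a - A\<bar> \<le> r * \<bar>A\<bar>" "\<bar>d\<bar> \<le> u"
  shows "\<bar>a * (1 + d) - A\<bar> \<le> (r * (1 + u) + u) * \<bar>A\<bar>"
proof -
  have "\<bar>a * (1 + d) - A\<bar> = \<bar>(a - A) * (1 + d) + A * d\<bar>" by (simp add: algebra_simps)
  also have "\<dots> \<le> \<bar>a - A\<bar> * \<bar>1 + d\<bar> + \<bar>A\<bar> * \<bar>d\<bar>"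
    by (metis abs_mult abs_triangle_ineq)
  also have "\<dots> \<le> r * \<bar>A\<bar> * (1 + u) + \<bar>A\<bar> * u"
    using assms by (intro add_mono mult_mono mult_left_mono) auto
  finally show ?thesis by (simp add: algebra_simps)
qed

lemma rel_err_divide_perturbed:
  fixes a N D r u d :: real
  assumes "\<bar>a - N\<bar> \<le> r * \<bar>N\<bar>" "D \<noteq> 0" "\<bar>d\<bar> \<le> u" "u \<le> 1/2"
  shows "\<bar>a / (D * (1 + d)) - N / D\<bar> \<le> 2 * (r + u) * \<bar>N / D\<bar>"
proof -
  have d: "1 + d \<ge> 1/2" using assms by linarith
  have "\<bar>a - N * (1 + d)\<bar> = \<bar>(a - N) - N * d\<bar>" by (simp add: algebra_simps)
  also have "\<dots> \<le> \<bar>a - N\<bar> + \<bar>N * d\<bar>" by (rule abs_triangle_ineq4)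
  also have "\<bar>N * d\<bar> \<le> \<bar>N\<bar> * u"
    unfolding abs_mult by (rule mult_left_mono) (use assms in auto)
  finally have numerator: "\<bar>a - N * (1 + d)\<bar> \<le> (r + u) * \<bar>N\<bar>"
    using assms(1) by (simp add: algebra_simps)
  have "a / (D * (1 + d)) - N / D = (a - N * (1 + d)) / (D * (1 + d))"
    using d by (simp add: diff_divide_distrib)
  then have "\<bar>a / (D * (1 + d)) - N / D\<bar> = \<bar>a - N * (1 + d)\<bar> / (\<bar>D\<bar> * (1 + d))"
    using d by (simp add: abs_divide abs_mult)
  also have "\<dots> \<le> ((r + u) * \<bar>N\<bar>) / (\<bar>D\<bar> * (1/2))"
    using numerator assms d by (intro frac_le) auto
  also have "\<dots> = 2 * (r + u) * \<bar>N / D\<bar>" by (simp add: abs_divide)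
  finally show ?thesis .
qed

lemma rel_err_rounded_divided_difference:
  fixes a b A B s r e u :: real
  assumes fsub: "std_op u (-) fsub" and fdiv: "std_op u (/) fdiv"
    and u: "u \<le> 1/2" and e: "8 * u \<le> e"
    and AB: "A * B < 0" and sr: "s \<noteq> r"
    and a: "\<bar>a - A\<bar> \<le> e * \<bar>A\<bar>" and b: "\<bar>b - B\<bar> \<le> e * \<bar>B\<bar>"
  shows "\<bar>fdiv (fsub a b) (fsub s r) - (A - B) / (s - r)\<bar> \<le> 9 * e * \<bar>(A - B) / (s - r)\<bar>"
proof -
  obtain d1 where d1: "\<bar>d1\<bar> \<le> u" "fsub a b = (a - b) * (1 + d1)"
    using fsub unfolding std_op_def by blast
  obtain d2 where d2: "\<bar>d2\<bar> \<le> u" "fsub s r = (s - r) * (1 + d2)"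
    using fsub unfolding std_op_def by blast
  obtain d3 where d3: "\<bar>d3\<bar> \<le> u"
      "fdiv (fsub a b) (fsub s r) = fsub a b / ((s - r) * (1 + d2)) * (1 + d3)"
    using fdiv d2(2) unfolding std_op_def by metis
  have "\<bar>fsub a b - (A - B)\<bar> \<le> (e * (1 + u) + u) * \<bar>A - B\<bar>"
    unfolding d1(2) by (intro rel_err_mult_one_plus rel_err_diff_of_opposite_signs AB a b d1(1))
  then have "\<bar>fsub a b / ((s - r) * (1 + d2)) - (A - B) / (s - r)\<bar>
      \<le> 2 * ((e * (1 + u) + u) + u) * \<bar>(A - B) / (s - r)\<bar>"
    using sr d2(1) u by (intro rel_err_divide_perturbed) auto
  then have "\<bar>fdiv (fsub a b) (fsub s r) - (A - B) / (s - r)\<bar>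
      \<le> (2 * ((e * (1 + u) + u) + u) * (1 + u) + u) * \<bar>(A - B) / (s - r)\<bar>"
    unfolding d3(2) using d3(1) by (rule rel_err_mult_one_plus)
  moreover have "2 * ((e * (1 + u) + u) + u) * (1 + u) + u \<le> 9 * e"
  proof -
    have "0 \<le> u" using d1(1) by linarith
    then have "e * u \<le> e * (1/2)" "u * u \<le> u * (1/2)" "e * u * u \<le> e * u * (1/2)"
      using u e by (intro mult_left_mono; simp)+
    then show ?thesis using e \<open>0 \<le> u\<close> by (simp add: algebra_simps)
  qed
  ultimately show ?thesis
    by (meson abs_ge_zero mult_right_mono order_trans)
qed

lemma node_gaps_same_sign:
  fixes t :: "'a::order \<Rightarrow> real"
  assumes "strict_mono_on A t \<or> strict_antimono_on A t"
    and "i \<in> A" "j \<in> A" "i < j" "k \<in> A" "l \<in> A" "k < l"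
  shows "(t j - t i) * (t l - t k) > 0"
  using assms(1)
proof
  assume "strict_mono_on A t"
  then have "t i < t j" "t k < t l" using assms by (auto dest: monotone_onD)
  then show ?thesis by simp
next
  assume "strict_antimono_on A t"
  then have "t j < t i" "t l < t k" using assms by (auto dest: monotone_onD)
  then show ?thesis by (simp add: mult_neg_neg)
qed

lemma divdiff_alternating:
  assumes nodes: "strict_mono_on {1..m} t \<or> strict_antimono_on {1..m} t"
    and alternating: "\<And>i. 1 \<le> i \<Longrightarrow> Suc i \<le> m \<Longrightarrow> y i * y (Suc i) < 0"
    and "1 \<le> i" "Suc (i + k) \<le> m"
  shows "divdiff t y k i * divdiff t y k (Suc i) < 0"
  using assms(3,4)
proof (induction k arbitrary: i)
  case (0 i)
  then show ?case using alternating by simp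
next
  case (Suc k i)
  let ?d = "divdiff t y k"
  have "(?d (Suc i) - ?d i) * (?d (Suc (Suc i)) - ?d (Suc i)) < 0"
    using Suc by (intro consecutive_diffs_opposite_signs Suc.IH) auto
  moreover have "(t (i + Suc k) - t i) * (t (Suc i + Suc k) - t (Suc i)) > 0"
    using Suc.prems by (intro node_gaps_same_sign[OF nodes]) auto
  ultimately show ?case
    by (simp add: divide_neg_pos)
qed

lemma fl_divdiff_rel_err:
  assumes nodes: "strict_mono_on {1..m} t \<or> strict_antimono_on {1..m} t"
    and alternating: "\<And>i. 1 \<le> i \<Longrightarrow> Suc i \<le> m \<Longrightarrow> y i * y (Suc i) < 0"
    and fsub: "std_op u (-) fsub" and fdiv: "std_op u (/) fdiv"
    and u: "0 \<le> u" "u \<le> 1/2" and "C0 \<ge> 0"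
    and data: "\<And>i. 1 \<le> i \<Longrightarrow> i \<le> m \<Longrightarrow> \<bar>yv i - y i\<bar> \<le> C0 * u * \<bar>y i\<bar>"
    and "1 \<le> i" "i + k \<le> m"
  shows "\<bar>fl_divdiff fsub fdiv t yv k i - divdiff t y k i\<bar>
           \<le> 9 ^ k * (C0 + 8) * u * \<bar>divdiff t y k i\<bar>"
  using assms(9,10)
proof (induction k arbitrary: i)
  case (0 i)
  then have "\<bar>yv i - y i\<bar> \<le> C0 * u * \<bar>y i\<bar>" using data by simp
  also have "\<dots> \<le> (C0 + 8) * u * \<bar>y i\<bar>" using u by (intro mult_right_mono) auto
  finally show ?case by simp
next
  case (Suc k i)
  have "(t (i + Suc k) - t i) * (t (i + Suc k) - t i) > 0"
    using Suc.prems by (intro node_gaps_same_sign[OF nodes]) auto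
  then have distinct: "t (i + Suc k) \<noteq> t i" by auto
  have opposite: "divdiff t y k (Suc i) * divdiff t y k i < 0"
    using divdiff_alternating[where y = y, OF nodes alternating, of i k] Suc.prems by (simp add: mult.commute)
  have "8 \<le> 9 ^ k * (C0 + 8)"
    using \<open>C0 \<ge> 0\<close> mult_mono[of 1 "9 ^ k" 8 "C0 + 8"] by simp
  then have e: "8 * u \<le> 9 ^ k * (C0 + 8) * u"
    using u(1) by (rule mult_right_mono)
  have "\<bar>fl_divdiff fsub fdiv t yv (Suc k) i - divdiff t y (Suc k) i\<bar>
      \<le> 9 * (9 ^ k * (C0 + 8) * u) * \<bar>divdiff t y (Suc k) i\<bar>"
    unfolding fl_divdiff.simps divdiff.simps
    by (rule rel_err_rounded_divided_difference[OF fsub fdiv u(2) e opposite distinct])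
      (use Suc in auto)
  then show ?case by (simp add: mult.assoc)
qed

theorem corollary1:
  fixes n :: nat and t :: "nat \<Rightarrow> real" and f :: "real \<Rightarrow> real" and C0 :: real
  assumes "n \<ge> 1"
    and "(\<forall>i j. 1 \<le> i \<longrightarrow> i < j \<longrightarrow> j \<le> n + 1 \<longrightarrow> t i < t j) \<or>
         (\<forall>i j. 1 \<le> i \<longrightarrow> i < j \<longrightarrow> j \<le> n + 1 \<longrightarrow> t i > t j)"
    and "\<forall>i. 1 \<le> i \<longrightarrow> i \<le> n \<longrightarrow> f (t i) * f (t (Suc i)) < 0"
    and "C0 \<ge> 0"
  shows "\<exists>C>0. \<exists>u0>0. \<forall>u fsub fdiv yv.
           0 \<le> u \<longrightarrow> u \<le> u0 \<longrightarrow>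
           std_op u (-) fsub \<longrightarrow> std_op u (/) fdiv \<longrightarrow>
           (\<forall>i. 1 \<le> i \<longrightarrow> i \<le> n + 1 \<longrightarrow> \<bar>yv i - f (t i)\<bar> \<le> C0 * u * \<bar>f (t i)\<bar>) \<longrightarrow>
           (\<forall>k i. k \<le> n \<longrightarrow> 1 \<le> i \<longrightarrow> i + k \<le> n + 1 \<longrightarrow>
              \<bar>fl_divdiff fsub fdiv t yv k i - divdiff t (\<lambda>j. f (t j)) k i\<bar>
                \<le> C * u * \<bar>divdiff t (\<lambda>j. f (t j)) k i\<bar>)"
proof -
  have nodes: "strict_mono_on {1..n + 1} t \<or> strict_antimono_on {1..n + 1} t"
    using assms(2) unfolding monotone_on_def by auto
  have alternating: "\<And>i. 1 \<le> i \<Longrightarrow> Suc i \<le> n + 1 \<Longrightarrow> f (t i) * f (t (Suc i)) < 0"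
    using assms(3) by simp
  have bound: "\<bar>fl_divdiff fsub fdiv t yv k i - divdiff t (\<lambda>j. f (t j)) k i\<bar>
      \<le> 9 ^ n * (C0 + 8) * u * \<bar>divdiff t (\<lambda>j. f (t j)) k i\<bar>"
    if u: "0 \<le> u" "u \<le> 1/2" and "std_op u (-) fsub" "std_op u (/) fdiv"
      and "\<forall>i. 1 \<le> i \<longrightarrow> i \<le> n + 1 \<longrightarrow> \<bar>yv i - f (t i)\<bar> \<le> C0 * u * \<bar>f (t i)\<bar>"
      and k: "k \<le> n" and "1 \<le> i" "i + k \<le> n + 1"
    for u fsub fdiv yv k i
  proof -
    have "\<bar>fl_divdiff fsub fdiv t yv k i - divdiff t (\<lambda>j. f (t j)) k i\<bar>
        \<le> 9 ^ k * (C0 + 8) * u * \<bar>divdiff t (\<lambda>j. f (t j)) k i\<bar>"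
      using that assms(4)
      by (intro fl_divdiff_rel_err[where y = "\<lambda>j. f (t j)", OF nodes alternating]) auto
    also have "\<dots> \<le> 9 ^ n * (C0 + 8) * u * \<bar>divdiff t (\<lambda>j. f (t j)) k i\<bar>"
      using k u assms(4) by (intro mult_right_mono power_increasing) auto
    finally show ?thesis .
  qed
  show ?thesis
    by (rule exI[of _ "9 ^ n * (C0 + 8)"])
      (use bound assms(4) in \<open>auto intro!: exI[of _ "1/2"]\<close>)
qed

end
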